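(* Let $N$ be a locally compact separable metric space and let $\{\psi_k\}_{k\in\mathbb{N}}$ be a Schauder basis of $C_0(N)$. Let $\mathcal{M}(N)=\{m(\mu):\mu\in\mathcal{P}(N)\}\subset\mathbb{R}^{\mathbb{N}}$, where $m(\mu)=(\int_N\psi_k\,d\mu)_{k\in\mathbb{N}}$. Then the moment transform $\mathcal{K}:\mathcal{P}(N)\to\mathcal{M}(N)$, $\mu\mapsto m(\mu)$, is a homeomorphism, where $\mathcal{P}(N)$ carries the weak topology and $\mathcal{M}(N)$ carries the subspace topology induced by the product topology on $\mathbb{R}^{\mathbb{N}}$.
   Context: - $\mathcal{P}(N)$ is the set of Borel probability measures on $N$, with the weak topology (convergence against bounded continuous functions). - $C_0(N)$ is the space of continuous real-valued functions on $N$ vanishing at infinity, with the sup norm. *)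

theory Defs
  imports "HOL-Probability.Probability"
begin

definition C0 :: "('a::metric_space \<Rightarrow> real) \<Rightarrow> bool" where
  "C0 f \<longleftrightarrow> continuous_on UNIV f \<and>
     (\<forall>e>0. \<exists>K. compact K \<and> (\<forall>x. x \<notin> K \<longrightarrow> \<bar>f x\<bar> < e))"

definition schauder_basis_C0 :: "(nat \<Rightarrow> 'a::metric_space \<Rightarrow> real) \<Rightarrow> bool" where
  "schauder_basis_C0 \<psi> \<longleftrightarrow> (\<forall>k. C0 (\<psi> k)) \<and>
     (\<forall>f. C0 f \<longrightarrow> (\<exists>!c::nat \<Rightarrow> real.
        uniform_limit UNIV (\<lambda>n x. \<Sum>k<n. c k * \<psi> k x) f sequentially))"

definition prob_measures :: "'a::topological_space measure set" where
  "prob_measures = {M. prob_space M \<and> sets M = sets borel}"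

definition bounded_continuous :: "('a::topological_space \<Rightarrow> real) \<Rightarrow> bool" where
  "bounded_continuous f \<longleftrightarrow> continuous_on UNIV f \<and> bounded (range f)"

definition weak_topology :: "'a::topological_space measure topology" where
  "weak_topology = subtopology
     (topology_generated_by
        {{M. integral\<^sup>L M f \<in> U} | f U. bounded_continuous f \<and> open U})
     prob_measures"

definition moment :: "(nat \<Rightarrow> 'a \<Rightarrow> real) \<Rightarrow> 'a measure \<Rightarrow> (nat \<Rightarrow> real)" where
  "moment \<psi> M = (\<lambda>k. integral\<^sup>L M (\<psi> k))"

end

theory Submission
  imports Defs
begin

text \<open>
  Each \<open>\<psi>\<^sub>k\<close> is bounded and continuous, so the moment map is weakly continuous. For the
  converse, \<open>\<real>\<^sup>\<nat>\<close> is metrizable, so it suffices to show that convergence of all moments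
  \<open>m(\<mu>\<^sub>n) \<longrightarrow> m(\<mu>)\<close> forces \<open>\<integral>f d\<mu>\<^sub>n \<longrightarrow> \<integral>f d\<mu>\<close> for every bounded continuous \<open>f\<close>. Uniform
  approximation by partial sums of the Schauder expansion gives this for \<open>f \<in> C\<^sub>0(N)\<close>. Since
  \<open>N\<close> is \<open>\<sigma>\<close>-compact, the limit \<open>\<mu>\<close> has almost all of its mass on a compact \<open>K\<close>; an Urysohn
  function \<open>\<phi> \<in> C\<^sub>0(N)\<close> with \<open>0 \<le> \<phi> \<le> 1\<close> and \<open>\<phi> = 1\<close> on \<open>K\<close> then has \<open>\<integral>\<phi> d\<mu>\<^sub>n\<close> close to 1
  eventually, so no mass escapes and \<open>\<integral>f d\<mu>\<^sub>n\<close> is uniformly close to \<open>\<integral>f\<phi> d\<mu>\<^sub>n\<close>, with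
  \<open>f\<phi> \<in> C\<^sub>0(N)\<close>. Taking constant sequences shows injectivity, because integrals of bounded
  continuous functions determine a Borel probability measure on a metric space (they
  determine the measure of every closed set).
\<close>

lemma C0_imp_bounded_continuous:
  assumes "C0 f"
  shows "bounded_continuous f"
proof -
  obtain K where K: "compact K" "\<And>x. x \<notin> K \<Longrightarrow> \<bar>f x\<bar> < 1"
    using assms unfolding C0_def by (meson zero_less_one)
  have "bounded (f ` K)"
    using assms K(1) unfolding C0_def
    by (meson compact_continuous_image compact_imp_bounded continuous_on_subset subset_UNIV)
  moreover have "range f \<subseteq> f ` K \<union> {-1..1}"
    using K(2) by (force simp: abs_less_iff)
  ultimately have "bounded (range f)"
    by (meson bounded_Un bounded_closed_interval bounded_subset)
  with assms show ?thesis
    unfolding C0_def bounded_continuous_def by blast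
qed

lemma C0_if_compact_support:
  assumes "continuous_on UNIV g" "compact L" "\<And>x. x \<notin> L \<Longrightarrow> g x = 0"
  shows "C0 g"
  unfolding C0_def using assms by auto

lemma bounded_continuousE:
  assumes "bounded_continuous f"
  obtains B where "B > 0" "\<And>x. \<bar>f x\<bar> \<le> B"
proof -
  obtain B where "\<And>x. \<bar>f x\<bar> \<le> B"
    using assms unfolding bounded_continuous_def bounded_iff by (metis rangeI real_norm_def)
  then show ?thesis
    using that[of "max B 1"] by (meson max.cobounded1 order_trans zero_less_one less_max_iff_disj)
qed

lemma prob_measuresD:
  assumes "M \<in> prob_measures"
  shows "prob_space M" "sets M = sets borel" "space M = UNIV"
  using assms unfolding prob_measures_def by (auto dest: sets_eq_imp_space_eq)

lemma integrable_bounded_continuous: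
  assumes "M \<in> prob_measures" "bounded_continuous f"
  shows "integrable M f"
proof -
  interpret prob_space M
    using assms(1) by (rule prob_measuresD)
  obtain B where B: "\<And>x. \<bar>f x\<bar> \<le> B"
    using bounded_continuousE[OF assms(2)] by blast
  have "f \<in> borel_measurable M"
    using assms unfolding bounded_continuous_def measurable_cong_sets[OF prob_measuresD(2)[OF assms(1)] refl]
    by (simp add: borel_measurable_continuous_onI)
  then show ?thesis
    using B by (intro integrable_const_bound[where B=B]) auto
qed

lemma abs_integral_diff_le_integral:
  fixes f g h :: "'a \<Rightarrow> real"
  assumes "integrable M f" "integrable M g" "integrable M h"
    and "\<And>x. x \<in> space M \<Longrightarrow> \<bar>f x - g x\<bar> \<le> h x"
  shows "\<bar>integral\<^sup>L M f - integral\<^sup>L M g\<bar> \<le> integral\<^sup>L M h"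
proof -
  have "\<bar>integral\<^sup>L M f - integral\<^sup>L M g\<bar> = \<bar>integral\<^sup>L M (\<lambda>x. f x - g x)\<bar>"
    using assms by simp
  also have "\<dots> \<le> integral\<^sup>L M (\<lambda>x. \<bar>f x - g x\<bar>)"
    by (rule integral_abs_bound)
  also have "\<dots> \<le> integral\<^sup>L M h"
    using assms by (intro integral_mono) auto
  finally show ?thesis .
qed

lemma abs_integral_diff_cutoff_le:
  fixes f \<phi> :: "'a \<Rightarrow> real"
  assumes "prob_space M" "integrable M f" "integrable M \<phi>" "integrable M (\<lambda>x. f x * \<phi> x)"
    and "\<And>x. \<bar>f x\<bar> \<le> B" "\<And>x. 0 \<le> \<phi> x" "\<And>x. \<phi> x \<le> 1"
  shows "\<bar>integral\<^sup>L M f - integral\<^sup>L M (\<lambda>x. f x * \<phi> x)\<bar> \<le> B * (1 - integral\<^sup>L M \<phi>)"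
proof -
  interpret prob_space M by fact
  have "\<bar>f x - f x * \<phi> x\<bar> \<le> B * (1 - \<phi> x)" for x
  proof -
    have "\<bar>f x - f x * \<phi> x\<bar> = \<bar>f x * (1 - \<phi> x)\<bar>"
      by (simp add: algebra_simps)
    also have "\<dots> = \<bar>f x\<bar> * (1 - \<phi> x)"
      using assms(7)[of x] by (simp add: abs_mult)
    also have "\<dots> \<le> B * (1 - \<phi> x)"
      using assms(5,7) by (intro mult_right_mono) auto
    finally show ?thesis .
  qed
  then have "\<bar>integral\<^sup>L M f - integral\<^sup>L M (\<lambda>x. f x * \<phi> x)\<bar> \<le> integral\<^sup>L M (\<lambda>x. B * (1 - \<phi> x))"
    using assms by (intro abs_integral_diff_le_integral) auto
  also have "\<dots> = B * (1 - integral\<^sup>L M \<phi>)"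
    using assms(3) by (simp add: prob_space)
  finally show ?thesis .
qed

lemma tendsto_by_approximation:
  fixes a :: "nat \<Rightarrow> real"
  assumes "\<And>e. e > 0 \<Longrightarrow> \<exists>b l. b \<longlonglongrightarrow> l \<and> (\<forall>\<^sub>F n in sequentially. \<bar>a n - b n\<bar> \<le> e) \<and> \<bar>A - l\<bar> \<le> e"
  shows "a \<longlonglongrightarrow> A"
proof (rule LIMSEQ_I)
  fix r :: real
  assume "r > 0"
  then obtain b l where b: "b \<longlonglongrightarrow> l" "\<forall>\<^sub>F n in sequentially. \<bar>a n - b n\<bar> \<le> r/4" "\<bar>A - l\<bar> \<le> r/4"
    using assms[of "r/4"] by auto
  have "\<forall>\<^sub>F n in sequentially. dist (b n) l < r/4"
    using tendstoD[OF b(1), of "r/4"] \<open>r > 0\<close> by simp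
  with b(2) have "\<forall>\<^sub>F n in sequentially. norm (a n - A) < r"
    by eventually_elim (use b(3) in \<open>auto simp: dist_real_def abs_if split: if_splits\<close>)
  then show "\<exists>no. \<forall>n\<ge>no. norm (a n - A) < r"
    by (simp add: eventually_sequentially)
qed

lemma schauder_basis_C0_uniform_approx:
  assumes "schauder_basis_C0 \<psi>" "C0 f" "e > 0"
  obtains c N where "\<And>x. \<bar>f x - (\<Sum>k<N. c k * \<psi> k x)\<bar> < e"
proof -
  obtain c where "uniform_limit UNIV (\<lambda>n x. \<Sum>k<n. c k * \<psi> k x) f sequentially"
    using assms(1,2) unfolding schauder_basis_C0_def by blast
  then have "\<forall>\<^sub>F n in sequentially. \<forall>x. dist (\<Sum>k<n. c k * \<psi> k x) (f x) < e"
    using assms(3) by (simp add: uniform_limit_iff)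
  then obtain N where "\<And>x. dist (\<Sum>k<N. c k * \<psi> k x) (f x) < e"
    unfolding eventually_sequentially by blast
  then show ?thesis
    using that[of c N] by (simp add: dist_real_def abs_minus_commute)
qed

lemma integral_sum_basis:
  assumes "schauder_basis_C0 \<psi>" "M \<in> prob_measures"
  shows "integral\<^sup>L M (\<lambda>x. \<Sum>k<N. c k * \<psi> k x) = (\<Sum>k<N. c k * moment \<psi> M k)"
proof -
  have "integrable M (\<psi> k)" for k
    using assms unfolding schauder_basis_C0_def
    by (blast intro: integrable_bounded_continuous C0_imp_bounded_continuous)
  then show ?thesis
    unfolding moment_def by (simp add: integral_sum)
qed

lemma integral_C0_tendsto_if_moments_tendsto:
  assumes \<psi>: "schauder_basis_C0 \<psi>"
    and \<mu>s: "\<And>n. \<mu>s n \<in> prob_measures" and \<mu>: "\<mu> \<in> prob_measures"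
    and lim: "\<And>k. (\<lambda>n. moment \<psi> (\<mu>s n) k) \<longlonglongrightarrow> moment \<psi> \<mu> k"
    and f: "C0 f"
  shows "(\<lambda>n. integral\<^sup>L (\<mu>s n) f) \<longlonglongrightarrow> integral\<^sup>L \<mu> f"
proof (rule tendsto_by_approximation)
  fix e :: real
  assume "e > 0"
  then obtain c N where close: "\<And>x. \<bar>f x - (\<Sum>k<N. c k * \<psi> k x)\<bar> < e"
    using schauder_basis_C0_uniform_approx[OF \<psi> f] by blast
  define S where "S x = (\<Sum>k<N. c k * \<psi> k x)" for x
  have f_bc: "bounded_continuous f"
    using f by (rule C0_imp_bounded_continuous)
  obtain B where B: "\<And>x. \<bar>f x\<bar> \<le> B"
    using bounded_continuousE[OF f_bc] by blast
  have "continuous_on UNIV (\<psi> k)" for k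
    using \<psi> unfolding schauder_basis_C0_def C0_def by blast
  moreover have "\<bar>S x\<bar> \<le> B + e" for x
    using close[of x] B[of x] unfolding S_def by linarith
  ultimately have S_bc: "bounded_continuous S"
    unfolding bounded_continuous_def bounded_iff S_def
    by (intro conjI continuous_intros exI[of _ "B + e"]) auto
  have "\<bar>integral\<^sup>L M f - integral\<^sup>L M S\<bar> \<le> e" if "M \<in> prob_measures" for M
  proof -
    interpret prob_space M
      using that by (rule prob_measuresD)
    have "\<bar>integral\<^sup>L M f - integral\<^sup>L M S\<bar> \<le> integral\<^sup>L M (\<lambda>_. e)"
    proof (rule abs_integral_diff_le_integral)
      show "integrable M f" "integrable M S"
        using integrable_bounded_continuous that f_bc S_bc by blast+
      show "\<bar>f x - S x\<bar> \<le> e" for x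
        using close[of x] by (simp add: S_def)
    qed simp
    then show ?thesis
      by (simp add: prob_space)
  qed
  moreover have "(\<lambda>n. integral\<^sup>L (\<mu>s n) S) \<longlonglongrightarrow> integral\<^sup>L \<mu> S"
    unfolding S_def integral_sum_basis[OF \<psi> \<mu>s] integral_sum_basis[OF \<psi> \<mu>]
    by (intro tendsto_intros lim)
  ultimately show "\<exists>b l. b \<longlonglongrightarrow> l \<and> (\<forall>\<^sub>F n in sequentially. \<bar>integral\<^sup>L (\<mu>s n) f - b n\<bar> \<le> e)
      \<and> \<bar>integral\<^sup>L \<mu> f - l\<bar> \<le> e"
    using \<mu>s \<mu> by (intro exI[of _ "\<lambda>n. integral\<^sup>L (\<mu>s n) S"] exI[of _ "integral\<^sup>L \<mu> S"]) simp
qed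

lemma countable_compact_cover:
  assumes lc: "locally_compact_space (euclidean :: 'a::metric_space topology)"
    and sep: "separable_space (euclidean :: 'a::metric_space topology)"
  obtains \<C> :: "'a::metric_space set set" where "countable \<C>" "\<And>C. C \<in> \<C> \<Longrightarrow> compact C" "\<Union>\<C> = UNIV"
proof -
  obtain D :: "'a set" where D: "countable D" "closure D = UNIV"
    using sep unfolding separable_space_def by auto
  define C where "C = (\<lambda>(d :: 'a, n :: nat). cball d (1 / Suc n))"
  define I where "I = {p \<in> D \<times> UNIV. compact (C p)}"
  have cover: "\<exists>p\<in>I. x \<in> C p" for x
  proof -
    obtain U K where UK: "open U" "compact K" "x \<in> U" "U \<subseteq> K"
      using lc unfolding locally_compact_space_def
      by (metis compactin_euclidean_iff open_openin topspace_euclidean UNIV_I)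
    obtain r where r: "r > 0" "ball x r \<subseteq> U"
      using UK openE by blast
    obtain n :: nat where "2 / r < n"
      using reals_Archimedean2 by blast
    then have n: "2 / Suc n < r"
      using r(1) by (simp add: field_simps)
    have "x \<in> closure D"
      using D(2) by simp
    then obtain d where d: "d \<in> D" "dist d x < 1 / Suc n"
      using closure_approachable[THEN iffD1, rule_format, of x D "1 / Suc n"] by auto
    have "cball d (1 / Suc n) \<subseteq> ball x r"
    proof
      fix y
      assume "y \<in> cball d (1 / Suc n)"
      then have "dist x y < 2 / Suc n"
        using d(2) dist_triangle[of x y d] by (simp add: dist_commute)
      then show "y \<in> ball x r"
        using n by simp
    qed
    then have "compact (cball d (1 / Suc n))"
      using compact_Int_closed[OF UK(2) closed_cball, of d "1 / Suc n"] r(2) UK(4)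
      by (metis Int_absorb1 subset_trans)
    then have "(d, n) \<in> I"
      using d(1) by (simp add: I_def C_def)
    moreover have "x \<in> C (d, n)"
      using d(2) by (simp add: C_def dist_commute)
    ultimately show ?thesis ..
  qed
  show ?thesis
  proof (rule that)
    show "countable (C ` I)"
      using D(1) by (simp add: I_def)
    show "compact K" if "K \<in> C ` I" for K
      using that by (auto simp: I_def)
    show "\<Union>(C ` I) = UNIV"
      using cover by blast
  qed
qed

lemma prob_measure_tight:
  assumes lc: "locally_compact_space (euclidean :: 'a::metric_space topology)"
    and sep: "separable_space (euclidean :: 'a::metric_space topology)"
    and M: "M \<in> prob_measures" and "\<delta> > 0"
  obtains K :: "'a::metric_space set" where "compact K" "measure M K > 1 - \<delta>"
proof -
  interpret prob_space M
    using M by (rule prob_measuresD)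
  obtain \<C> :: "'a set set" where \<C>: "countable \<C>" "\<And>C. C \<in> \<C> \<Longrightarrow> compact C" "\<Union>\<C> = UNIV"
    using countable_compact_cover[OF lc sep] by blast
  then have "\<C> \<noteq> {}"
    by auto
  define K where "K n = (\<Union>i<n. from_nat_into \<C> i)" for n
  have K_compact: "compact (K n)" for n
    unfolding K_def using \<C>(2) from_nat_into[OF \<open>\<C> \<noteq> {}\<close>] by (simp add: compact_UN)
  then have "range K \<subseteq> sets M"
    using prob_measuresD(2)[OF M] by (auto intro: borel_closed compact_imp_closed)
  moreover have "incseq K"
    by (rule incseq_SucI) (auto simp: K_def lessThan_Suc)
  ultimately have "(\<lambda>n. measure M (K n)) \<longlonglongrightarrow> measure M (\<Union>n. K n)"
    by (rule finite_Lim_measure_incseq)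
  moreover have "(\<Union>n. K n) = space M"
  proof -
    have "x \<in> (\<Union>n. K n)" for x
    proof -
      obtain C where "C \<in> \<C>" "x \<in> C"
        using \<C>(3) by blast
      then obtain i where "x \<in> from_nat_into \<C> i"
        using range_from_nat_into[OF \<open>\<C> \<noteq> {}\<close> \<C>(1)] by (metis imageE)
      then show ?thesis
        unfolding K_def by (intro UN_I[of "Suc i"] UN_I[of i]) auto
    qed
    then show ?thesis
      using prob_measuresD(3)[OF M] by blast
  qed
  ultimately have "(\<lambda>n. measure M (K n)) \<longlonglongrightarrow> 1"
    by (simp add: prob_space)
  then have "\<forall>\<^sub>F n in sequentially. measure M (K n) > 1 - \<delta>"
    using \<open>\<delta> > 0\<close> by (simp add: order_tendstoD(1))
  then obtain n where "measure M (K n) > 1 - \<delta>"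
    using eventually_sequentially by auto
  then show ?thesis
    using that K_compact by blast
qed

lemma C0_cutoff:
  assumes lc: "locally_compact_space (euclidean :: 'a::metric_space topology)"
    and K: "compact K"
  obtains \<phi> :: "'a::metric_space \<Rightarrow> real"
  where "C0 \<phi>" "\<And>x. 0 \<le> \<phi> x" "\<And>x. \<phi> x \<le> 1" "\<And>x. x \<in> K \<Longrightarrow> \<phi> x = 1"
proof -
  obtain U L where UL: "openin euclidean U" "compactin euclidean L" "K \<subseteq> U" "U \<subseteq> L"
    using lc K locally_compact_space_compact_closed_compact[OF disjI1[OF Hausdorff_space_euclidean]]
    by (metis compactin_euclidean_iff)
  have "completely_regular_space (euclidean :: 'a topology)"
    by (rule metrizable_imp_completely_regular_space[OF metrizable_space_euclidean])
  moreover have "compactin euclidean K" "closedin euclidean (- U)" "disjnt K (- U)"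
    using K UL(1,3) by (auto simp: disjnt_def)
  ultimately obtain \<phi> :: "'a \<Rightarrow> real" where
    \<phi>: "continuous_map euclidean (top_of_set {0..1}) \<phi>" "\<phi> ` (- U) \<subseteq> {0}" "\<phi> ` K \<subseteq> {1}"
    by (elim Urysohn_completely_regular_compact_closed[OF zero_le_one])
  have "C0 \<phi>"
  proof (rule C0_if_compact_support)
    show "continuous_on UNIV \<phi>"
      using \<phi>(1) unfolding continuous_map_in_subtopology by auto
    show "compact L"
      using UL(2) by simp
    show "\<phi> x = 0" if "x \<notin> L" for x
      using \<phi>(2) UL(4) that by blast
  qed
  moreover have "\<phi> x \<in> {0..1}" for x
    using \<phi>(1) unfolding continuous_map_in_subtopology by auto
  moreover have "\<phi> x = 1" if "x \<in> K" for x
    using \<phi>(3) that by blast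
  ultimately show ?thesis
    by (intro that[of \<phi>]) auto
qed

lemma C0_mult_bounded_continuous:
  assumes "bounded_continuous f" "C0 g"
  shows "C0 (\<lambda>x. f x * g x)"
  unfolding C0_def
proof (intro conjI allI impI)
  obtain B where B: "B > 0" "\<And>x. \<bar>f x\<bar> \<le> B"
    using bounded_continuousE[OF assms(1)] by blast
  show "continuous_on UNIV (\<lambda>x. f x * g x)"
    using assms unfolding bounded_continuous_def C0_def by (intro continuous_intros) auto
  fix e :: real
  assume "e > 0"
  then obtain K where K: "compact K" "\<And>x. x \<notin> K \<Longrightarrow> \<bar>g x\<bar> < e / B"
    using assms(2) B(1) unfolding C0_def by (meson divide_pos_pos)
  have "\<bar>f x * g x\<bar> < e" if "x \<notin> K" for x
  proof -
    have "\<bar>f x * g x\<bar> \<le> B * \<bar>g x\<bar>"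
      using B(2)[of x] by (simp add: abs_mult mult_right_mono)
    also have "\<dots> < B * (e / B)"
      using K(2)[OF that] B(1) by (intro mult_strict_left_mono)
    finally show ?thesis
      using B(1) by simp
  qed
  with K(1) show "\<exists>K. compact K \<and> (\<forall>x. x \<notin> K \<longrightarrow> \<bar>f x * g x\<bar> < e)"
    by blast
qed

lemma integral_bounded_continuous_tendsto_if_C0:
  assumes lc: "locally_compact_space (euclidean :: 'a::metric_space topology)"
    and sep: "separable_space (euclidean :: 'a::metric_space topology)"
    and \<mu>s: "\<And>n. \<mu>s n \<in> prob_measures" and \<mu>: "\<mu> \<in> prob_measures"
    and C0_lim: "\<And>g. C0 g \<Longrightarrow> (\<lambda>n. integral\<^sup>L (\<mu>s n) g) \<longlonglongrightarrow> integral\<^sup>L \<mu> g"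
    and f: "bounded_continuous (f :: 'a \<Rightarrow> real)"
  shows "(\<lambda>n. integral\<^sup>L (\<mu>s n) f) \<longlonglongrightarrow> integral\<^sup>L \<mu> f"
proof (rule tendsto_by_approximation)
  fix e :: real
  assume "e > 0"
  obtain B where B: "B > 0" "\<And>x. \<bar>f x\<bar> \<le> B"
    using bounded_continuousE[OF f] by blast
  define \<delta> where "\<delta> = e / B"
  have "\<delta> > 0"
    using \<open>e > 0\<close> B(1) by (simp add: \<delta>_def)
  then obtain K where K: "compact K" "measure \<mu> K > 1 - \<delta>"
    by (rule prob_measure_tight[OF lc sep \<mu>])
  then obtain \<phi> where \<phi>: "C0 \<phi>" "\<And>x. 0 \<le> \<phi> x" "\<And>x. \<phi> x \<le> 1" "\<And>x. x \<in> K \<Longrightarrow> \<phi> x = 1"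
    using C0_cutoff[OF lc] by blast
  have \<phi>_bc: "bounded_continuous \<phi>"
    using \<phi>(1) by (rule C0_imp_bounded_continuous)
  have f\<phi>: "C0 (\<lambda>x. f x * \<phi> x)"
    using f \<phi>(1) by (rule C0_mult_bounded_continuous)
  have cutoff_close: "\<bar>integral\<^sup>L M f - integral\<^sup>L M (\<lambda>x. f x * \<phi> x)\<bar> \<le> e"
    if M: "M \<in> prob_measures" "integral\<^sup>L M \<phi> > 1 - \<delta>" for M
  proof -
    have "\<bar>integral\<^sup>L M f - integral\<^sup>L M (\<lambda>x. f x * \<phi> x)\<bar> \<le> B * (1 - integral\<^sup>L M \<phi>)"
      using M(1) f \<phi>_bc C0_imp_bounded_continuous[OF f\<phi>] B(2) \<phi>(2,3)
      by (intro abs_integral_diff_cutoff_le prob_measuresD integrable_bounded_continuous)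
    also have "\<dots> \<le> B * \<delta>"
      using M(2) B(1) by (intro mult_left_mono) auto
    finally show ?thesis
      using B(1) by (simp add: \<delta>_def)
  qed
  have "integral\<^sup>L \<mu> \<phi> > 1 - \<delta>"
  proof -
    interpret prob_space \<mu>
      using \<mu> by (rule prob_measuresD)
    have "K \<in> sets \<mu>"
      using K(1) prob_measuresD(2)[OF \<mu>] by (simp add: borel_compact)
    then have "measure \<mu> K = integral\<^sup>L \<mu> (indicator K)"
      by simp
    also have "\<dots> \<le> integral\<^sup>L \<mu> \<phi>"
      using \<open>K \<in> sets \<mu>\<close> integrable_bounded_continuous[OF \<mu> \<phi>_bc] \<phi>(2,4)
      by (intro integral_mono) (auto simp: indicator_def emeasure_eq_measure)
    finally show ?thesis
      using K(2) by simp
  qed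
  moreover have "\<forall>\<^sub>F n in sequentially. integral\<^sup>L (\<mu>s n) \<phi> > 1 - \<delta>"
    using order_tendstoD(1)[OF C0_lim[OF \<phi>(1)] calculation] .
  ultimately show "\<exists>b l. b \<longlonglongrightarrow> l \<and> (\<forall>\<^sub>F n in sequentially. \<bar>integral\<^sup>L (\<mu>s n) f - b n\<bar> \<le> e)
      \<and> \<bar>integral\<^sup>L \<mu> f - l\<bar> \<le> e"
    using C0_lim[OF f\<phi>] cutoff_close \<mu>s \<mu>
    by (intro exI[of _ "\<lambda>n. integral\<^sup>L (\<mu>s n) (\<lambda>x. f x * \<phi> x)"]
        exI[of _ "integral\<^sup>L \<mu> (\<lambda>x. f x * \<phi> x)"] conjI) (auto elim: eventually_mono)
qed

lemma bounded_continuous_infdist_cutoff: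
  "bounded_continuous (\<lambda>x. max 0 (1 - real j * infdist x F))"
  unfolding bounded_continuous_def bounded_iff
proof (intro conjI exI[of _ 1] ballI)
  show "continuous_on UNIV (\<lambda>x. max 0 (1 - real j * infdist x F))"
    by (intro continuous_intros)
  fix y
  assume "y \<in> range (\<lambda>x. max 0 (1 - real j * infdist x F))"
  then obtain x where "y = max 0 (1 - real j * infdist x F)"
    by blast
  moreover have "0 \<le> real j * infdist x F"
    by (simp add: infdist_nonneg)
  ultimately show "norm y \<le> 1"
    by simp
qed

lemma infdist_cutoff_tendsto_indicator:
  assumes "closed F" "F \<noteq> {}"
  shows "(\<lambda>j. max 0 (1 - real j * infdist x F)) \<longlonglongrightarrow> indicator F x"
proof (cases "x \<in> F")
  case True
  then show ?thesis
    by (simp add: infdist_zero)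
next
  case False
  then have "infdist x F > 0"
    using assms infdist_pos_not_in_closed by blast
  moreover obtain j0 :: nat where "1 / infdist x F < j0"
    using reals_Archimedean2 by blast
  ultimately have "1 < real j * infdist x F" if "j \<ge> j0" for j
    using that by (simp add: field_simps) (smt (verit) mult_right_mono of_nat_le_iff)
  then have "\<forall>\<^sub>F j in sequentially. max 0 (1 - real j * infdist x F) = 0"
    by (intro eventually_sequentiallyI[of j0]) fastforce
  then show ?thesis
    using False by (simp add: tendsto_eventually)
qed

lemma integral_infdist_cutoff_tendsto_measure:
  assumes M: "M \<in> prob_measures" and F: "closed F" "F \<noteq> {}"
  shows "(\<lambda>j. integral\<^sup>L M (\<lambda>x. max 0 (1 - real j * infdist x F))) \<longlonglongrightarrow> measure M F"
proof -
  interpret prob_space M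
    using M by (rule prob_measuresD)
  have sets_M: "sets M = sets borel"
    using M by (rule prob_measuresD)
  have "(\<lambda>j. integral\<^sup>L M (\<lambda>x. max 0 (1 - real j * infdist x F))) \<longlonglongrightarrow> integral\<^sup>L M (indicator F)"
  proof (rule integral_dominated_convergence[where w="\<lambda>_. 1"])
    show "indicator F \<in> borel_measurable M"
      using F(1) by (simp add: measurable_cong_sets[OF sets_M refl] borel_closed)
    show "(\<lambda>x. max 0 (1 - real j * infdist x F)) \<in> borel_measurable M" for j
      unfolding measurable_cong_sets[OF sets_M refl]
      by (intro borel_measurable_continuous_onI continuous_intros)
    show "AE x in M. norm (max 0 (1 - real j * infdist x F)) \<le> 1" for j
      by (simp add: infdist_nonneg)
    show "AE x in M. (\<lambda>j. max 0 (1 - real j * infdist x F)) \<longlonglongrightarrow> indicator F x"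
      using infdist_cutoff_tendsto_indicator[OF F] by simp
  qed simp
  then show ?thesis
    using F(1) sets_M by (simp add: borel_closed)
qed

lemma prob_measures_eqI_bounded_continuous:
  fixes \<mu> \<nu> :: "'a::metric_space measure"
  assumes \<mu>: "\<mu> \<in> prob_measures" and \<nu>: "\<nu> \<in> prob_measures"
    and eq: "\<And>f. bounded_continuous f \<Longrightarrow> integral\<^sup>L \<mu> f = integral\<^sup>L \<nu> f"
  shows "\<mu> = \<nu>"
proof -
  interpret P: prob_space \<mu>
    using \<mu> by (rule prob_measuresD)
  interpret Q: prob_space \<nu>
    using \<nu> by (rule prob_measuresD)
  have closed_eq: "measure \<mu> F = measure \<nu> F" if "closed F" for F :: "'a set"
  proof (cases "F = {}")
    case False
    have "(\<lambda>j. integral\<^sup>L \<nu> (\<lambda>x. max 0 (1 - real j * infdist x F))) \<longlonglongrightarrow> measure \<mu> F"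
      using integral_infdist_cutoff_tendsto_measure[OF \<mu> that False]
      by (simp only: eq[OF bounded_continuous_infdist_cutoff])
    then show ?thesis
      using integral_infdist_cutoff_tendsto_measure[OF \<nu> that False] by (rule LIMSEQ_unique)
  qed simp
  show ?thesis
  proof (rule measure_eqI_generator_eq[where E="Collect closed" and \<Omega>=UNIV and A="\<lambda>_. UNIV"])
    have "sets (borel :: 'a measure) = sigma_sets UNIV (Collect closed)"
      by (subst borel_eq_closed) (simp add: sets_measure_of)
    then show "sets \<mu> = sigma_sets UNIV (Collect closed)" "sets \<nu> = sigma_sets UNIV (Collect closed)"
      using prob_measuresD(2)[OF \<mu>] prob_measuresD(2)[OF \<nu>] by simp_all
    show "emeasure \<mu> F = emeasure \<nu> F" if "F \<in> Collect closed" for F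
      using closed_eq that by (simp add: P.emeasure_eq_measure Q.emeasure_eq_measure)
  qed (auto simp: Int_stable_def P.emeasure_eq_measure)
qed

lemma Union_weak_topology_generators:
  "\<Union>{{M. integral\<^sup>L M f \<in> U} | f U. bounded_continuous f \<and> open U} = (UNIV :: 'a::topological_space measure set)"
proof -
  have "{M. integral\<^sup>L M (\<lambda>_. 0::real) \<in> UNIV} \<in>
      {{M. integral\<^sup>L M f \<in> U} | f U. bounded_continuous f \<and> open U}"
    by (intro CollectI exI[of _ "\<lambda>_. 0::real"] exI[of _ "UNIV :: real set"])
       (auto simp: bounded_continuous_def)
  then show ?thesis
    by blast
qed

lemma topspace_weak_topology: "topspace weak_topology = prob_measures"
  unfolding weak_topology_def by (simp add: Union_weak_topology_generators)

lemma continuous_map_integral_weak_topology: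
  assumes "bounded_continuous f"
  shows "continuous_map weak_topology euclideanreal (\<lambda>M. integral\<^sup>L M f)"
  unfolding continuous_map_def topspace_weak_topology
proof (intro conjI allI impI)
  fix U :: "real set"
  assume "openin euclideanreal U"
  then have "openin (topology_generated_by {{M. integral\<^sup>L M f \<in> U} | f U. bounded_continuous f \<and> open U})
      {M. integral\<^sup>L M f \<in> U}"
    unfolding openin_topology_generated_by_iff
    by (intro generate_topology_on.Basis) (use assms in auto)
  then show "openin weak_topology {M \<in> prob_measures. integral\<^sup>L M f \<in> U}"
    unfolding weak_topology_def openin_subtopology by blast
qed simp

lemma continuous_map_into_weak_topology:
  fixes g :: "'b \<Rightarrow> 'a::topological_space measure"
  assumes "g \<in> topspace X \<rightarrow> prob_measures"
    and "\<And>f :: 'a \<Rightarrow> real. bounded_continuous f \<Longrightarrow> continuous_map X euclideanreal (\<lambda>y. integral\<^sup>L (g y) f)"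
  shows "continuous_map X weak_topology g"
  unfolding weak_topology_def
proof (intro continuous_map_into_subtopology continuous_on_generated_topo)
  fix W :: "'a measure set"
  assume "W \<in> {{M. integral\<^sup>L M f \<in> U} | f U. bounded_continuous f \<and> open U}"
  then obtain f :: "'a \<Rightarrow> real" and U where W: "W = {M. integral\<^sup>L M f \<in> U}" "bounded_continuous f" "open U"
    by blast
  then have "openin X {y \<in> topspace X. integral\<^sup>L (g y) f \<in> U}"
    using assms(2) by (intro openin_continuous_map_preimage) auto
  moreover have "g -` W \<inter> topspace X = {y \<in> topspace X. integral\<^sup>L (g y) f \<in> U}"
    using W(1) by auto
  ultimately show "openin X (g -` W \<inter> topspace X)"
    by simp
next
  show "g ` topspace X \<subseteq> \<Union>{{M. integral\<^sup>L M f \<in> U} | f U. bounded_continuous f \<and> open U}"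
    by (simp only: Union_weak_topology_generators subset_UNIV)
qed (use assms(1) in auto)

lemma tendsto_coordinate:
  fixes u :: "nat \<Rightarrow> 'i::countable \<Rightarrow> 'b::metric_space"
  assumes "u \<longlonglongrightarrow> a"
  shows "(\<lambda>n. u n k) \<longlonglongrightarrow> a k"
proof -
  have "isCont (\<lambda>x. x k) a"
    using continuous_on_product_coordinates[of k] continuous_on_eq_continuous_at[OF open_UNIV] by blast
  then show ?thesis
    using assms by (rule isCont_tendsto_compose)
qed

lemma bounded_continuous_schauder_basis:
  "schauder_basis_C0 \<psi> \<Longrightarrow> bounded_continuous (\<psi> k)"
  unfolding schauder_basis_C0_def by (blast intro: C0_imp_bounded_continuous)

lemma integral_tendsto_if_moments_tendsto:
  assumes lc: "locally_compact_space (euclidean :: 'a::metric_space topology)"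
    and sep: "separable_space (euclidean :: 'a::metric_space topology)"
    and \<psi>: "schauder_basis_C0 \<psi>"
    and \<mu>s: "\<And>n. \<mu>s n \<in> prob_measures" and \<mu>: "\<mu> \<in> prob_measures"
    and lim: "\<And>k. (\<lambda>n. moment \<psi> (\<mu>s n) k) \<longlonglongrightarrow> moment \<psi> \<mu> k"
    and f: "bounded_continuous (f :: 'a \<Rightarrow> real)"
  shows "(\<lambda>n. integral\<^sup>L (\<mu>s n) f) \<longlonglongrightarrow> integral\<^sup>L \<mu> f"
  by (rule integral_bounded_continuous_tendsto_if_C0[OF lc sep \<mu>s \<mu>
      integral_C0_tendsto_if_moments_tendsto[OF \<psi> \<mu>s \<mu> lim] f])

lemma inj_on_moment:
  assumes lc: "locally_compact_space (euclidean :: 'a::metric_space topology)"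
    and sep: "separable_space (euclidean :: 'a::metric_space topology)"
    and \<psi>: "schauder_basis_C0 (\<psi> :: nat \<Rightarrow> 'a \<Rightarrow> real)"
  shows "inj_on (moment \<psi>) prob_measures"
proof (rule inj_onI)
  fix \<mu> \<nu> :: "'a measure"
  assume \<mu>: "\<mu> \<in> prob_measures" and \<nu>: "\<nu> \<in> prob_measures" and eq: "moment \<psi> \<mu> = moment \<psi> \<nu>"
  show "\<mu> = \<nu>"
  proof (rule prob_measures_eqI_bounded_continuous[OF \<mu> \<nu>])
    fix f :: "'a \<Rightarrow> real"
    assume "bounded_continuous f"
    then have "(\<lambda>_. integral\<^sup>L \<mu> f) \<longlonglongrightarrow> integral\<^sup>L \<nu> f"
      using integral_tendsto_if_moments_tendsto[OF lc sep \<psi>, of "\<lambda>_. \<mu>" \<nu>] \<mu> \<nu> eq by simp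
    then show "integral\<^sup>L \<mu> f = integral\<^sup>L \<nu> f"
      by (simp add: LIMSEQ_const_iff)
  qed
qed

lemma continuous_map_moment:
  assumes "\<And>k. bounded_continuous (\<psi> k)"
  shows "continuous_map weak_topology (product_topology (\<lambda>_. euclideanreal) UNIV) (moment \<psi>)"
  unfolding continuous_map_componentwise_UNIV moment_def
  using continuous_map_integral_weak_topology[OF assms] by simp

lemma continuous_map_inv_into_moment:
  assumes lc: "locally_compact_space (euclidean :: 'a::metric_space topology)"
    and sep: "separable_space (euclidean :: 'a::metric_space topology)"
    and \<psi>: "schauder_basis_C0 (\<psi> :: nat \<Rightarrow> 'a \<Rightarrow> real)"
  shows "continuous_map (subtopology (product_topology (\<lambda>_. euclideanreal) UNIV) (moment \<psi> ` prob_measures))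
      weak_topology (inv_into prob_measures (moment \<psi>))"
    (is "continuous_map ?Y _ ?g")
proof (rule continuous_map_into_weak_topology)
  show "?g \<in> topspace ?Y \<rightarrow> prob_measures"
    by (auto intro: inv_into_into)
  fix f :: "'a \<Rightarrow> real"
  assume f: "bounded_continuous f"
  have "continuous_on (moment \<psi> ` prob_measures) (\<lambda>y. integral\<^sup>L (?g y) f)"
  proof (rule continuous_on_sequentiallyI)
    fix u a
    assume u: "\<forall>n. u n \<in> moment \<psi> ` prob_measures" "a \<in> moment \<psi> ` prob_measures" "u \<longlonglongrightarrow> a"
    have "(\<lambda>n. moment \<psi> (?g (u n)) k) \<longlonglongrightarrow> moment \<psi> (?g a) k" for k
      using tendsto_coordinate[OF u(3), of k] u(1,2) by (simp add: f_inv_into_f)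
    then show "(\<lambda>n. integral\<^sup>L (?g (u n)) f) \<longlonglongrightarrow> integral\<^sup>L (?g a) f"
      using u(1,2) f by (intro integral_tendsto_if_moments_tendsto[OF lc sep \<psi>] inv_into_into) auto
  qed
  then show "continuous_map ?Y euclideanreal (\<lambda>y. integral\<^sup>L (?g y) f)"
    by (simp add: euclidean_product_topology)
qed

theorem corollary1:
  fixes \<psi> :: "nat \<Rightarrow> 'a::metric_space \<Rightarrow> real"
  assumes "locally_compact_space (euclidean :: 'a topology)"
    and "separable_space (euclidean :: 'a topology)"
    and "schauder_basis_C0 \<psi>"
  shows "homeomorphic_map weak_topology
           (subtopology (product_topology (\<lambda>_. euclideanreal) UNIV) (moment \<psi> ` prob_measures))
           (moment \<psi>)"
proof -
  have "continuous_map weak_topology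
      (subtopology (product_topology (\<lambda>_. euclideanreal) UNIV) (moment \<psi> ` prob_measures)) (moment \<psi>)"
    using assms(3) bounded_continuous_schauder_basis
    by (intro continuous_map_into_subtopology continuous_map_moment) (auto simp: topspace_weak_topology)
  then have "homeomorphic_maps weak_topology
      (subtopology (product_topology (\<lambda>_. euclideanreal) UNIV) (moment \<psi> ` prob_measures))
      (moment \<psi>) (inv_into prob_measures (moment \<psi>))"
    using continuous_map_inv_into_moment[OF assms] inj_on_moment[OF assms]
    by (auto simp: homeomorphic_maps_def topspace_weak_topology f_inv_into_f)
  then show ?thesis
    unfolding homeomorphic_map_maps by blast
qed

end
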